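(* For every integer $n\geq 1$ there is a bijection $\phi:\mathfrak{S}_n\to\mathfrak{S}_n$ such that for every $\sigma\in\mathfrak{S}_n$, writing $\tau=\phi(\sigma)$, we have $$\overline{\mathrm{Fix}}(\sigma)=\mathrm{Suc}(\tau),\qquad \overline{\mathrm{Drop}}(\sigma)=\mathrm{najSuc}(\tau),\qquad \overline{\mathrm{Exc}}(\sigma)=\mathrm{Pred}(\tau).$$
   Context: $\mathfrak{S}_n$ denotes the set of permutations of $[n]=\{1,\dots,n\}$, written in one-line notation $\sigma=\sigma_1\sigma_2\cdots\sigma_n$. For $\sigma\in\mathfrak{S}_n$ define: - $\mathrm{Suc}(\sigma)=\{1\le i\le n-1 : \sigma_i+1=\sigma_{i+1}\}$ (successions); - $\overline{\mathrm{Fix}}(\sigma)=\{1\le i\le n-1 : \sigma_i=i\}$ (fixed points other than $n$); - $\mathrm{najSuc}(\sigma)=\{1\le i\le n-2 : \text{there exists } j \text{ with } i+2\le j\le n \text{ and } \sigma_j=\sigma_i+1\}$ (non-adjacent successions); - $\mathrm{Pred}(\sigma)=\{2\le i\le n : \text{there exists } j \text{ with } 1\le j<i \text{ and } \sigma_j=\sigma_i+1\}$ (predecessors); - $\overline{\mathrm{Drop}}(\sigma)=\{\sigma_i : 1\le i\le n-1,\ \sigma_i<i\}$ (the set of values, not positions, of drops at positions other than $n$); - $\overline{\mathrm{Exc}}(\sigma)=\{\sigma_i : 1\le i\le n-1,\ \sigma_i>i\}$ (the set of values, not positions, of excedances at positions other than $n$). Example: for $\tau=4\,1\,2\,6\,7\,5\,3$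 one has $\mathrm{Suc}(\tau)=\{2,4\}$, $\mathrm{najSuc}(\tau)=\{1,3\}$, $\mathrm{Pred}(\tau)=\{6,7\}$. *)

theory Defs
  imports "HOL-Combinatorics.Permutations"
begin

definition perms :: "nat \<Rightarrow> (nat \<Rightarrow> nat) set" where
  "perms n = {\<sigma>. \<sigma> permutes {1..n}}"

definition Suc_set :: "nat \<Rightarrow> (nat \<Rightarrow> nat) \<Rightarrow> nat set" where
  "Suc_set n \<sigma> = {i. 1 \<le> i \<and> i \<le> n - 1 \<and> \<sigma> i + 1 = \<sigma> (i + 1)}"

definition FixBar :: "nat \<Rightarrow> (nat \<Rightarrow> nat) \<Rightarrow> nat set" where
  "FixBar n \<sigma> = {i. 1 \<le> i \<and> i \<le> n - 1 \<and> \<sigma> i = i}"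

definition najSuc :: "nat \<Rightarrow> (nat \<Rightarrow> nat) \<Rightarrow> nat set" where
  "najSuc n \<sigma> = {i. 1 \<le> i \<and> i + 2 \<le> n \<and> (\<exists>j. i + 2 \<le> j \<and> j \<le> n \<and> \<sigma> j = \<sigma> i + 1)}"

definition Pred :: "nat \<Rightarrow> (nat \<Rightarrow> nat) \<Rightarrow> nat set" where
  "Pred n \<sigma> = {i. 2 \<le> i \<and> i \<le> n \<and> (\<exists>j. 1 \<le> j \<and> j < i \<and> \<sigma> j = \<sigma> i + 1)}"

definition DropBar :: "nat \<Rightarrow> (nat \<Rightarrow> nat) \<Rightarrow> nat set" where
  "DropBar n \<sigma> = {\<sigma> i | i. 1 \<le> i \<and> i \<le> n - 1 \<and> \<sigma> i < i}"

definition ExcBar :: "nat \<Rightarrow> (nat \<Rightarrow> nat) \<Rightarrow> nat set" where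
  "ExcBar n \<sigma> = {\<sigma> i | i. 1 \<le> i \<and> i \<le> n - 1 \<and> \<sigma> i > i}"

end

theory Submission
  imports Defs "HOL-Combinatorics.Orbits"
begin

text \<open>Write \<open>w\<close> for the inverse of \<open>\<tau>\<close> (so \<open>w k\<close> is the position of the value \<open>k\<close>) and cut
  \<open>w\<close> before each of its left-to-right minima. Reading every block as a cycle gives a
  permutation \<open>g\<close>, and the permutation \<open>\<sigma>\<close> with \<open>\<phi> \<sigma> = \<tau>\<close> places \<open>w k\<close> at position
  \<open>g (w k) - 1\<close> for \<open>k < n\<close> and \<open>w n\<close> at position \<open>n\<close>. That position is \<open>w (k + 1) - 1\<close> if
  \<open>w (k + 1)\<close> is not a left-to-right minimum and is below \<open>w k\<close> otherwise, so \<open>\<sigma>\<close> has a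
  fixed point, a drop or an excedance there exactly when \<open>w (k + 1) = w k + 1\<close>,
  \<open>w (k + 1) > w k + 1\<close> or \<open>w (k + 1) < w k\<close>, i.e. when \<open>w k\<close> lies in \<open>Suc\<close>, \<open>najSuc\<close> or
  \<open>Pred\<close> of \<open>\<tau>\<close>. The construction is injective: \<open>g\<close> is the inverse of \<open>\<sigma>\<close> followed by the
  cyclic shift \<open>i \<mapsto> i + 1 mod n\<close>, and \<open>w\<close> lists the cycles of \<open>g\<close>, each started at its
  minimum, in decreasing order of minima.\<close>

definition prefix_min :: "(nat \<Rightarrow> nat) \<Rightarrow> nat \<Rightarrow> nat" where
  "prefix_min w k = Min (w ` {1..k})"

lemma prefix_min_le: "1 \<le> i \<Longrightarrow> i \<le> k \<Longrightarrow> prefix_min w k \<le> w i"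
  unfolding prefix_min_def by (rule Min_le) auto

lemma prefix_min_attained:
  assumes "1 \<le> k"
  obtains i where "1 \<le> i" "i \<le> k" "prefix_min w k = w i"
proof -
  have "prefix_min w k \<in> w ` {1..k}"
    unfolding prefix_min_def using assms by (intro Min_in) auto
  then show ?thesis using that by auto
qed

lemma prefix_min_Suc: "1 \<le> k \<Longrightarrow> prefix_min w (Suc k) = min (prefix_min w k) (w (Suc k))"
proof -
  assume "1 \<le> k"
  then have "{1..Suc k} = insert (Suc k) {1..k}" by auto
  then show ?thesis
    unfolding prefix_min_def using \<open>1 \<le> k\<close> by (simp add: min.commute)
qed

lemma prefix_min_antimono: "1 \<le> j \<Longrightarrow> j \<le> k \<Longrightarrow> prefix_min w k \<le> prefix_min w j"
  unfolding prefix_min_def by (rule Min_antimono) auto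

text \<open>Cut the word \<open>w\<close> before each of its left-to-right minima and close every block into a
  cycle; the resulting permutation \<open>g\<close> satisfies \<open>g (w k) = cycle_succ n w k\<close>.\<close>

definition cycle_succ :: "nat \<Rightarrow> (nat \<Rightarrow> nat) \<Rightarrow> nat \<Rightarrow> nat" where
  "cycle_succ n w k =
     (if k < n \<and> prefix_min w k < w (Suc k) then w (Suc k) else prefix_min w k)"

definition slot :: "nat \<Rightarrow> (nat \<Rightarrow> nat) \<Rightarrow> nat \<Rightarrow> nat" where
  "slot n w k = (if k \<in> {1..<n} then cycle_succ n w k - 1 else k)"

text \<open>For \<open>w = inv \<tau>\<close> this is the preimage of \<open>\<tau>\<close> under the bijection of the theorem.\<close>

definition arrange :: "nat \<Rightarrow> (nat \<Rightarrow> nat) \<Rightarrow> nat \<Rightarrow> nat" where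
  "arrange n w = w \<circ> inv (slot n w)"

locale word =
  fixes n :: nat and w :: "nat \<Rightarrow> nat"
  assumes n_pos: "1 \<le> n" and permutes: "w permutes {1..n}"
begin

lemma w_in: "k \<in> {1..n} \<Longrightarrow> w k \<in> {1..n}"
  using permutes_in_image[OF permutes] by simp

lemma w_eq_iff: "w i = w j \<longleftrightarrow> i = j"
  using permutes_inj[OF permutes] by (auto dest: injD)

lemma prefix_min_n: "prefix_min w n = 1"
  unfolding prefix_min_def using permutes_image[OF permutes] n_pos by (simp add: Min_eq_iff)

lemma cycle_succ_last: "cycle_succ n w n = 1"
  unfolding cycle_succ_def using prefix_min_n by simp

lemma cycle_succ_if_record:
  assumes "1 \<le> k" "k < n"
  shows "cycle_succ n w k =
    (if prefix_min w (Suc k) = w (Suc k) then prefix_min w k else w (Suc k))"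
proof -
  obtain i where "i \<le> k" "prefix_min w k = w i"
    using prefix_min_attained assms(1) by metis
  then have "w (Suc k) \<noteq> prefix_min w k" using w_eq_iff by auto
  then show ?thesis
    unfolding cycle_succ_def prefix_min_Suc[OF assms(1)] using assms by auto
qed

lemma cycle_succ_bounds:
  assumes "1 \<le> k" "k < n"
  shows "2 \<le> cycle_succ n w k" "cycle_succ n w k \<le> n"
proof -
  obtain i where i: "1 \<le> i" "i \<le> k" "prefix_min w k = w i"
    using prefix_min_attained assms(1) by metis
  have "w (Suc k) \<noteq> w i" using w_eq_iff i by auto
  moreover have "w (Suc k) \<in> {1..n}" "w i \<in> {1..n}" using w_in i assms by auto
  ultimately show "2 \<le> cycle_succ n w k" "cycle_succ n w k \<le> n"
    unfolding cycle_succ_def using i assms by auto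
qed

lemma cycle_succ_compare:
  assumes "1 \<le> k" "k < n"
  shows "w k = cycle_succ n w k - 1 \<longleftrightarrow> w (Suc k) = w k + 1"
    and "w k < cycle_succ n w k - 1 \<longleftrightarrow> w k + 2 \<le> w (Suc k)"
    and "cycle_succ n w k - 1 < w k \<longleftrightarrow> w (Suc k) < w k"
proof -
  have "prefix_min w k \<le> w k" using prefix_min_le assms by auto
  moreover have "w (Suc k) \<noteq> w k" using w_eq_iff by auto
  ultimately show "w k = cycle_succ n w k - 1 \<longleftrightarrow> w (Suc k) = w k + 1"
    and "w k < cycle_succ n w k - 1 \<longleftrightarrow> w k + 2 \<le> w (Suc k)"
    and "cycle_succ n w k - 1 < w k \<longleftrightarrow> w (Suc k) < w k"
    unfolding cycle_succ_def using assms cycle_succ_bounds[OF assms] by auto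
qed

text \<open>A value of the first kind of \<open>cycle_succ\<close> sits at a non-record position, one of the
  second kind at a record position, and prefix minima taken just before different records
  differ.\<close>

lemma cycle_succ_inj_lt:
  assumes jk: "1 \<le> j" "j < k" "k < n" and eq: "cycle_succ n w j = cycle_succ n w k"
  shows False
proof -
  have k: "1 \<le> k" using jk by simp
  obtain i where i: "i \<le> j" "prefix_min w j = w i"
    using prefix_min_attained jk(1) by metis
  obtain q where q: "q \<le> k" "prefix_min w k = w q"
    using prefix_min_attained k by metis
  have "prefix_min w k \<le> prefix_min w (Suc j)"
    using prefix_min_antimono jk by simp
  then show False
    using eq cycle_succ_if_record[OF jk(1) less_trans[OF jk(2,3)]] cycle_succ_if_record[OF k jk(3)]
      prefix_min_Suc[OF jk(1), of w] i q jk w_eq_iff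
    by (auto split: if_splits)
qed

lemma cycle_succ_inj:
  "\<lbrakk>1 \<le> j; j < n; 1 \<le> k; k < n; cycle_succ n w j = cycle_succ n w k\<rbrakk> \<Longrightarrow> j = k"
  using cycle_succ_inj_lt[of j k] cycle_succ_inj_lt[of k j] by (metis linorder_neqE_nat)

lemma cycle_succ_same_block:
  assumes "1 \<le> k" "k \<le> n"
  obtains j where "j \<in> {1..n}" "cycle_succ n w k = w j" "prefix_min w j = prefix_min w k"
proof (cases "k < n \<and> prefix_min w k < w (Suc k)")
  case True
  then have "cycle_succ n w k = w (Suc k)" "prefix_min w (Suc k) = prefix_min w k"
    using prefix_min_Suc[OF assms(1)] unfolding cycle_succ_def by auto
  then show ?thesis using that[of "Suc k"] True by simp
next
  case False
  obtain i where i: "1 \<le> i" "i \<le> k" "prefix_min w k = w i"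
    using prefix_min_attained assms(1) by metis
  have "prefix_min w k \<le> prefix_min w i" "prefix_min w i \<le> w i"
    using prefix_min_antimono[of i k w] prefix_min_le[of i i w] i by auto
  then have "cycle_succ n w k = w i" "prefix_min w i = prefix_min w k"
    using False i unfolding cycle_succ_def by auto
  then show ?thesis using that[of i] i assms by simp
qed

lemma slot_permutes: "slot n w permutes {1..n}"
proof (rule bij_imp_permutes)
  have into: "slot n w ` {1..n} \<subseteq> {1..n}"
  proof (rule image_subsetI)
    fix k assume "k \<in> {1..n}"
    then show "slot n w k \<in> {1..n}"
      using cycle_succ_bounds[of k] by (cases "k < n") (auto simp: slot_def)
  qed
  have "inj_on (slot n w) {1..n}"
  proof (rule inj_onI)
    fix j k assume "j \<in> {1..n}" "k \<in> {1..n}" "slot n w j = slot n w k"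
    then show "j = k"
      using cycle_succ_bounds[of j] cycle_succ_bounds[of k] cycle_succ_inj[of j k]
      by (auto simp: slot_def split: if_splits)
  qed
  then show "bij_betw (slot n w) {1..n} {1..n}"
    using into endo_inj_surj[OF _ into] by (simp add: bij_betw_def)
qed (auto simp: slot_def)

lemma arrange_slot: "arrange n w (slot n w k) = w k"
  unfolding arrange_def using permutes_inverses(2)[OF slot_permutes] by simp

lemma arrange_permutes: "arrange n w permutes {1..n}"
  unfolding arrange_def using permutes_compose[OF permutes_inv[OF slot_permutes] permutes] .

lemma arrange_image_positions:
  "arrange n w ` {i \<in> {1..n-1}. R (arrange n w i) i}
     = w ` {k \<in> {1..<n}. R (w k) (cycle_succ n w k - 1)}"
proof -
  have slots: "slot n w ` {1..<n} = {1..n-1}"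
  proof -
    have "{1..<n} = {1..n} - {n}" "{1..n-1} = {1..n} - {n}"
      using n_pos by auto
    moreover have "slot n w ` {1..n} = {1..n}" "slot n w n = n"
      using permutes_image[OF slot_permutes] by (auto simp: slot_def)
    moreover have "slot n w ` ({1..n} - {n}) = slot n w ` {1..n} - slot n w ` {n}"
      by (rule inj_on_image_set_diff[OF permutes_inj_on[OF slot_permutes]]) (use n_pos in auto)
    ultimately show ?thesis using n_pos by simp
  qed
  have "{i \<in> slot n w ` {1..<n}. R (arrange n w i) i}
      = slot n w ` {k \<in> {1..<n}. R (arrange n w (slot n w k)) (slot n w k)}"
    by blast
  also have "\<dots> = slot n w ` {k \<in> {1..<n}. R (w k) (cycle_succ n w k - 1)}"
    unfolding arrange_slot by (intro arg_cong[where f = "image _"] Collect_cong) (auto simp: slot_def)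
  finally show ?thesis
    unfolding slots[symmetric] by (simp add: image_image arrange_slot)
qed

lemma FixBar_arrange: "FixBar n (arrange n w) = w ` {k \<in> {1..<n}. w (Suc k) = w k + 1}"
proof -
  have "FixBar n (arrange n w) = arrange n w ` {i \<in> {1..n-1}. arrange n w i = i}"
    unfolding FixBar_def by force
  also have "\<dots> = w ` {k \<in> {1..<n}. w k = cycle_succ n w k - 1}"
    by (rule arrange_image_positions[where R = "(=)"])
  also have "\<dots> = w ` {k \<in> {1..<n}. w (Suc k) = w k + 1}"
    by (intro arg_cong[where f = "image w"] Collect_cong) (metis atLeastLessThan_iff cycle_succ_compare(1))
  finally show ?thesis .
qed

lemma DropBar_arrange: "DropBar n (arrange n w) = w ` {k \<in> {1..<n}. w k + 2 \<le> w (Suc k)}"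
proof -
  have "DropBar n (arrange n w) = arrange n w ` {i \<in> {1..n-1}. arrange n w i < i}"
    unfolding DropBar_def by force
  also have "\<dots> = w ` {k \<in> {1..<n}. w k < cycle_succ n w k - 1}"
    by (rule arrange_image_positions[where R = "(<)"])
  also have "\<dots> = w ` {k \<in> {1..<n}. w k + 2 \<le> w (Suc k)}"
    by (intro arg_cong[where f = "image w"] Collect_cong) (metis atLeastLessThan_iff cycle_succ_compare(2))
  finally show ?thesis .
qed

lemma ExcBar_arrange: "ExcBar n (arrange n w) = w ` {k \<in> {1..<n}. w (Suc k) < w k}"
proof -
  have "ExcBar n (arrange n w) = arrange n w ` {i \<in> {1..n-1}. i < arrange n w i}"
    unfolding ExcBar_def by force
  also have "\<dots> = w ` {k \<in> {1..<n}. cycle_succ n w k - 1 < w k}"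
    by (rule arrange_image_positions[where R = "\<lambda>a i. i < a"])
  also have "\<dots> = w ` {k \<in> {1..<n}. w (Suc k) < w k}"
    by (intro arg_cong[where f = "image w"] Collect_cong) (metis atLeastLessThan_iff cycle_succ_compare(3))
  finally show ?thesis .
qed

lemma cycle_succ_recovered:
  assumes "k \<in> {1..n}"
  shows "(if inv (arrange n w) (w k) = n then 1 else inv (arrange n w) (w k) + 1)
    = cycle_succ n w k"
proof -
  have "inv (arrange n w) (w k) = slot n w k"
    using arrange_slot permutes_inverses(2)[OF arrange_permutes] by metis
  then show ?thesis
    using assms cycle_succ_last cycle_succ_bounds[of k] by (auto simp: slot_def)
qed

end

lemma successor_positions:
  assumes t: "t permutes {1..n}"
  shows "{i \<in> {1..n}. \<exists>j \<in> {1..n}. t j = t i + 1 \<and> Q i j}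
    = inv t ` {k \<in> {1..<n}. Q (inv t k) (inv t (Suc k))}"
proof -
  have t_in: "t i \<in> {1..n} \<longleftrightarrow> i \<in> {1..n}" and inv_t_in: "inv t i \<in> {1..n} \<longleftrightarrow> i \<in> {1..n}"
    for i using permutes_in_image[OF t] permutes_in_image[OF permutes_inv[OF t]] by simp_all
  note inverses = permutes_inverses[OF t]
  show ?thesis
  proof (intro set_eqI iffI)
    fix i assume "i \<in> {i \<in> {1..n}. \<exists>j \<in> {1..n}. t j = t i + 1 \<and> Q i j}"
    then obtain j where i: "i \<in> {1..n}" "j \<in> {1..n}" "t j = t i + 1" "Q i j" by blast
    then have "t i \<in> {1..<n}" using t_in[of i] t_in[of j] by auto
    moreover have "inv t (t i) = i" "inv t (Suc (t i)) = j"
      using inverses(2)[of i] inverses(2)[of j] i(3) by simp_all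
    ultimately show "i \<in> inv t ` {k \<in> {1..<n}. Q (inv t k) (inv t (Suc k))}"
      using i(4) by (intro image_eqI[of _ _ "t i"]) simp_all
  next
    fix i assume "i \<in> inv t ` {k \<in> {1..<n}. Q (inv t k) (inv t (Suc k))}"
    then obtain k where k: "k \<in> {1..<n}" "Q (inv t k) (inv t (Suc k))" "i = inv t k" by blast
    then have "inv t (Suc k) \<in> {1..n}" "i \<in> {1..n}" "t (inv t (Suc k)) = t i + 1"
      using inv_t_in[of k] inv_t_in[of "Suc k"] inverses(1) by auto
    then show "i \<in> {i \<in> {1..n}. \<exists>j \<in> {1..n}. t j = t i + 1 \<and> Q i j}"
      using k by blast
  qed
qed

lemma Suc_set_eq:
  assumes "t permutes {1..n}"
  shows "Suc_set n t = inv t ` {k \<in> {1..<n}. inv t (Suc k) = inv t k + 1}"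
proof -
  have "Suc_set n t = {i \<in> {1..n}. \<exists>j \<in> {1..n}. t j = t i + 1 \<and> j = i + 1}"
    unfolding Suc_set_def by auto
  also have "\<dots> = inv t ` {k \<in> {1..<n}. inv t (Suc k) = inv t k + 1}"
    by (rule successor_positions[OF assms, of "\<lambda>i j. j = i + 1"])
  finally show ?thesis .
qed

lemma najSuc_eq:
  assumes "t permutes {1..n}"
  shows "najSuc n t = inv t ` {k \<in> {1..<n}. inv t k + 2 \<le> inv t (Suc k)}"
proof -
  have "najSuc n t = {i \<in> {1..n}. \<exists>j \<in> {1..n}. t j = t i + 1 \<and> i + 2 \<le> j}"
    unfolding najSuc_def by auto
  also have "\<dots> = inv t ` {k \<in> {1..<n}. inv t k + 2 \<le> inv t (Suc k)}"
    by (rule successor_positions[OF assms, of "\<lambda>i j. i + 2 \<le> j"])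
  finally show ?thesis .
qed

lemma Pred_eq:
  assumes "t permutes {1..n}"
  shows "Pred n t = inv t ` {k \<in> {1..<n}. inv t (Suc k) < inv t k}"
proof -
  have "Pred n t = {i \<in> {1..n}. \<exists>j \<in> {1..n}. t j = t i + 1 \<and> j < i}"
    unfolding Pred_def by auto
  also have "\<dots> = inv t ` {k \<in> {1..<n}. inv t (Suc k) < inv t k}"
    by (rule successor_positions[OF assms, of "\<lambda>i j. j < i"])
  finally show ?thesis .
qed

lemma arrange_inv_statistics:
  assumes "1 \<le> n" and t: "t permutes {1..n}"
  shows "FixBar n (arrange n (inv t)) = Suc_set n t"
    and "DropBar n (arrange n (inv t)) = najSuc n t"
    and "ExcBar n (arrange n (inv t)) = Pred n t"
proof -
  interpret word n "inv t" using assms permutes_inv by unfold_locales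
  show "FixBar n (arrange n (inv t)) = Suc_set n t"
    using FixBar_arrange Suc_set_eq[OF t] by simp
  show "DropBar n (arrange n (inv t)) = najSuc n t"
    using DropBar_arrange najSuc_eq[OF t] by simp
  show "ExcBar n (arrange n (inv t)) = Pred n t"
    using ExcBar_arrange Pred_eq[OF t] by simp
qed

locale cycle_word = word +
  fixes g :: "nat \<Rightarrow> nat"
  assumes g_word: "k \<in> {1..n} \<Longrightarrow> g (w k) = cycle_succ n w k"
begin

lemma orbit_in_block:
  assumes p: "p \<in> {1..n}" and y: "y \<in> orbit g (w p)"
  obtains j where "j \<in> {1..n}" "y = w j" "prefix_min w j = prefix_min w p"
proof -
  from y have "\<exists>j \<in> {1..n}. y = w j \<and> prefix_min w j = prefix_min w p"
  proof (induction rule: orbit.induct)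
    case base
    then show ?case using g_word[OF p] cycle_succ_same_block p by (metis atLeastAtMost_iff)
  next
    case (step y)
    then obtain j where "j \<in> {1..n}" "y = w j" "prefix_min w j = prefix_min w p" by blast
    then show ?case using g_word cycle_succ_same_block by (metis atLeastAtMost_iff)
  qed
  then show ?thesis using that by blast
qed

lemma prefix_min_in_orbit: "p \<in> {1..n} \<Longrightarrow> prefix_min w p \<in> orbit g (w p)"
proof (induction "n - p" arbitrary: p)
  case 0
  then have "p = n" by auto
  then show ?case using g_word[OF 0(2)] cycle_succ_last prefix_min_n orbit.base by metis
next
  case (Suc d)
  show ?case
  proof (cases "p < n \<and> prefix_min w p < w (Suc p)")
    case True
    then have "g (w p) = w (Suc p)" "prefix_min w (Suc p) = prefix_min w p"
      using g_word[OF Suc.prems] prefix_min_Suc[of p w] Suc.prems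
      unfolding cycle_succ_def by auto
    moreover have "prefix_min w (Suc p) \<in> orbit g (w (Suc p))"
      using Suc True by auto
    ultimately show ?thesis using orbit_subset by metis
  next
    case False
    then show ?thesis
      using g_word[OF Suc.prems] orbit.base[of g "w p"] unfolding cycle_succ_def by auto
  qed
qed

lemma record_le_orbit:
  assumes "p \<in> {1..n}" "prefix_min w p = w p" "y \<in> orbit g (w p)"
  shows "w p \<le> y"
proof -
  obtain j where "j \<in> {1..n}" "y = w j" "prefix_min w j = prefix_min w p"
    using orbit_in_block assms(1,3) .
  then show ?thesis using prefix_min_le[of j j w] assms(2) by auto
qed

end

text \<open>In \<open>w'\<close> the record value \<open>w' k\<close> is the least element of its \<open>g\<close>-orbit; if it were
  larger than \<open>w k\<close>, then in \<open>w\<close> it would sit at a later position \<open>p\<close>, whose orbit contains the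
  smaller \<open>prefix_min w p\<close>.\<close>

lemma record_le_word:
  assumes W: "cycle_word n w g" and W': "cycle_word n w' g"
    and k: "k \<in> {1..n}" and agree: "\<And>i. i \<in> {1..<k} \<Longrightarrow> w i = w' i"
    and k_record: "prefix_min w' k = w' k"
  shows "w' k \<le> w k"
proof (rule ccontr)
  interpret W: cycle_word n w g by (rule W)
  interpret W': cycle_word n w' g by (rule W')
  assume "\<not> w' k \<le> w k"
  define p where "p = inv w (w' k)"
  have wp: "w p = w' k"
    unfolding p_def using permutes_inverses(1)[OF W.permutes] by simp
  have p: "p \<in> {1..n}"
    using wp W'.w_in[OF k] W.w_in permutes_not_in[OF W.permutes, of p] by fastforce
  have "k < p"
  proof (rule ccontr)
    assume "\<not> k < p"
    then have "p \<in> {1..<k}" using p wp \<open>\<not> w' k \<le> w k\<close> by (cases "p = k") auto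
    then show False using agree[of p] wp W'.w_eq_iff by auto
  qed
  then have "prefix_min w p < w' k"
    using prefix_min_le[of k p w] k \<open>\<not> w' k \<le> w k\<close> by auto
  moreover have "prefix_min w p \<in> orbit g (w' k)"
    using W.prefix_min_in_orbit[OF p] wp by simp
  ultimately show False using W'.record_le_orbit[OF k k_record] by fastforce
qed

text \<open>The common value \<open>g (w (k - 1))\<close> is an earlier entry (a prefix minimum) exactly when
  position \<open>k\<close> is a record, in \<open>w\<close> as in \<open>w'\<close>; at a non-record position it is \<open>w k = w' k\<close>.\<close>

lemma first_difference_is_record:
  assumes W: "cycle_word n w g" and W': "cycle_word n w' g"
    and k: "k \<in> {1..n}" and agree: "\<And>i. i \<in> {1..<k} \<Longrightarrow> w i = w' i"
    and differ: "w k \<noteq> w' k"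
  shows "prefix_min w k = w k"
proof (cases "k = 1")
  case False
  interpret W: cycle_word n w g by (rule W)
  interpret W': cycle_word n w' g by (rule W')
  obtain j where j: "k = Suc j" "1 \<le> j" "j < n" using k False by (cases k) auto
  have same_min: "prefix_min w' j = prefix_min w j"
    unfolding prefix_min_def using agree j by (intro arg_cong[where f = Min] image_cong) auto
  have "cycle_succ n w j = cycle_succ n w' j"
    using W.g_word[of j] W'.g_word[of j] agree[of j] j by auto
  moreover obtain i where "i \<le> j" "prefix_min w j = w i"
    using prefix_min_attained j(2) by metis
  ultimately show ?thesis
    using W.cycle_succ_if_record[OF j(2,3)] W'.cycle_succ_if_record[OF j(2,3)] same_min
      agree[of i] W.w_eq_iff W'.w_eq_iff differ j
    by (auto split: if_splits)
qed (simp add: prefix_min_def)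

lemma cycle_word_unique:
  assumes W: "cycle_word n w g" and W': "cycle_word n w' g"
  shows "w = w'"
proof (rule ccontr)
  interpret W: cycle_word n w g by (rule W)
  interpret W': cycle_word n w' g by (rule W')
  assume "w \<noteq> w'"
  then have "\<exists>k. k \<in> {1..n} \<and> w k \<noteq> w' k"
    using permutes_not_in[OF W.permutes] permutes_not_in[OF W'.permutes] by (metis ext)
  then obtain k where k: "k \<in> {1..n}" "w k \<noteq> w' k"
    and agree: "\<And>i. i < k \<Longrightarrow> \<not> (i \<in> {1..n} \<and> w i \<noteq> w' i)"
    using exists_least_iff[of "\<lambda>k. k \<in> {1..n} \<and> w k \<noteq> w' k"] by blast
  have agree': "w i = w' i" "w' i = w i" if "i \<in> {1..<k}" for i
    using agree[of i] that k(1) by auto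
  have "prefix_min w k = w k" "prefix_min w' k = w' k"
    using first_difference_is_record[OF W W' k(1) agree'(1)]
      first_difference_is_record[OF W' W k(1) agree'(2)] k(2) by auto
  then show False
    using record_le_word[OF W W' k(1) agree'(1)] record_le_word[OF W' W k(1) agree'(2)] k(2)
    by (metis le_antisym)
qed

lemma arrange_inj:
  assumes "word n w" "word n w'" "arrange n w = arrange n w'"
  shows "w = w'"
proof -
  define g where "g x = (if inv (arrange n w) x = n then 1 else inv (arrange n w) x + 1)" for x
  have "cycle_word n v g" if "word n v" "arrange n v = arrange n w" for v
  proof (intro cycle_word.intro cycle_word_axioms.intro that(1))
    fix k assume "k \<in> {1..n}"
    then show "g (v k) = cycle_succ n v k"
      unfolding g_def that(2)[symmetric] by (rule word.cycle_succ_recovered[OF that(1)])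
  qed
  then have "cycle_word n w g" "cycle_word n w' g" using assms by auto
  then show ?thesis by (rule cycle_word_unique)
qed

lemma arrange_inv_bij:
  assumes "1 \<le> n"
  shows "bij_betw (\<lambda>t. arrange n (inv t)) (perms n) (perms n)"
proof -
  have word: "word n (inv t)" if "t \<in> perms n" for t
    using assms that permutes_inv by unfold_locales (auto simp: perms_def)
  have "(\<lambda>t. arrange n (inv t)) ` perms n \<subseteq> perms n"
    using word word.arrange_permutes by (auto simp: perms_def)
  moreover have "inj_on (\<lambda>t. arrange n (inv t)) (perms n)"
  proof (rule inj_onI)
    fix t t' assume t: "t \<in> perms n" "t' \<in> perms n" and "arrange n (inv t) = arrange n (inv t')"
    then have "inv t = inv t'" using arrange_inj word by blast
    then show "t = t'" using t permutes_inv_inv unfolding perms_def by (metis mem_Collect_eq)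
  qed
  moreover have "finite (perms n)"
    unfolding perms_def by (rule finite_permutations) simp
  ultimately show ?thesis
    by (simp add: bij_betw_def endo_inj_surj)
qed

theorem mainTheorem1:
  fixes n :: nat
  assumes "n \<ge> 1"
  shows "\<exists>\<phi>. bij_betw \<phi> (perms n) (perms n) \<and>
    (\<forall>\<sigma>\<in>perms n. FixBar n \<sigma> = Suc_set n (\<phi> \<sigma>) \<and>
                    DropBar n \<sigma> = najSuc n (\<phi> \<sigma>) \<and>
                    ExcBar n \<sigma> = Pred n (\<phi> \<sigma>))"
proof (intro exI conjI ballI)
  note \<Theta> = arrange_inv_bij[OF assms]
  show "bij_betw (inv_into (perms n) (\<lambda>t. arrange n (inv t))) (perms n) (perms n)"
    by (rule bij_betw_inv_into[OF \<Theta>])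
  fix \<sigma> assume \<sigma>: "\<sigma> \<in> perms n"
  define t where "t = inv_into (perms n) (\<lambda>t. arrange n (inv t)) \<sigma>"
  have "t permutes {1..n}"
    using bij_betw_apply[OF bij_betw_inv_into[OF \<Theta>] \<sigma>] by (simp add: t_def perms_def)
  moreover have "\<sigma> = arrange n (inv t)"
    using bij_betw_inv_into_right[OF \<Theta> \<sigma>] by (simp add: t_def)
  ultimately show "FixBar n \<sigma> = Suc_set n t" "DropBar n \<sigma> = najSuc n t" "ExcBar n \<sigma> = Pred n t"
    using arrange_inv_statistics[OF assms] by simp_all
qed

end
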